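(* Let $(S_n)_{n\ge0}$ be defined by $S_0=3$, $S_1=1$, $S_2=3$ and $S_{n+1}=S_n+S_{n-1}+S_{n-2}$ for $n\ge 2$. Let $\alpha,\beta,\gamma$ be the roots of $x^3-x^2-x-1=0$ and $C_n=\alpha^n\beta^n+\alpha^n\gamma^n+\beta^n\gamma^n$ for $n\ge0$. Then for all $n\ge 0$, $$2S_n=C_n^2-C_{2n}.$$
   Context: $S_n$ is the generalized Lucas (generalized Tribonacci) sequence. *)

theory Defs
  imports Complex_Main
begin

fun S :: "nat \<Rightarrow> int" where
  "S 0 = 3"
| "S (Suc 0) = 1"
| "S (Suc (Suc 0)) = 3"
| "S (Suc (Suc (Suc n))) = S (Suc (Suc n)) + S (Suc n) + S n"

definition C :: "complex \<Rightarrow> complex \<Rightarrow> complex \<Rightarrow> nat \<Rightarrow> complex" where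
  "C \<alpha> \<beta> \<gamma> n = \<alpha>^n * \<beta>^n + \<alpha>^n * \<gamma>^n + \<beta>^n * \<gamma>^n"

end

theory Submission
  imports Defs
begin

text \<open>With \<open>e\<^sub>1 = \<alpha>+\<beta>+\<gamma> = 1\<close>, \<open>e\<^sub>2 = -1\<close> and \<open>e\<^sub>3 = \<alpha>\<beta>\<gamma> = 1\<close> (Vieta), Newton's identities
  show that \<open>S\<^sub>n\<close> is the power sum \<open>\<alpha>\<^sup>n + \<beta>\<^sup>n + \<gamma>\<^sup>n\<close>. On the other hand \<open>C\<^sub>n\<close> is the second
  elementary symmetric function of \<open>x = \<alpha>\<^sup>n, y = \<beta>\<^sup>n, z = \<gamma>\<^sup>n\<close> and \<open>C\<^sub>2\<^sub>n\<close> the sum of the squares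
  of its terms, so \<open>C\<^sub>n\<^sup>2 - C\<^sub>2\<^sub>n = 2xyz(x+y+z) = 2(\<alpha>\<beta>\<gamma>)\<^sup>n S\<^sub>n = 2S\<^sub>n\<close>.\<close>

lemma vieta_cubic:
  fixes a b c p q r :: "'a :: field_char_0"
  assumes "\<forall>x. x^3 + p*x^2 + q*x + r = (x - a) * (x - b) * (x - c)"
  shows "a + b + c = -p" and "a*b + a*c + b*c = q" and "a*b*c = -r"
proof -
  have at0: "r = -(a*b*c)"
    using assms[rule_format, of 0] by simp
  have at1: "1 + p + q + r = 1 - (a+b+c) + (a*b + a*c + b*c) - a*b*c"
    using assms[rule_format, of 1] by (simp add: algebra_simps)
  have at_minus1: "-1 + p - q + r = -1 - (a+b+c) - (a*b + a*c + b*c) - a*b*c"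
    using assms[rule_format, of "-1"] by (simp add: algebra_simps power2_eq_square power3_eq_cube)
  show "a*b*c = -r" using at0 by simp
  show "a + b + c = -p"
  proof -
    have "2 * (a + b + c) = 2 * (-p)" using at0 at1 at_minus1 by algebra
    then show ?thesis by (metis mult_left_cancel zero_neq_numeral)
  qed
  show "a*b + a*c + b*c = q"
  proof -
    have "2 * q = 2 * (a*b + a*c + b*c)" using at1 at_minus1 by algebra
    then show ?thesis by (metis mult_left_cancel zero_neq_numeral)
  qed
qed

lemma power_sum_newton3:
  fixes a b c :: "'a :: comm_ring_1"
  shows "a^(n+3) + b^(n+3) + c^(n+3)
    = (a+b+c) * (a^(n+2) + b^(n+2) + c^(n+2)) - (a*b + a*c + b*c) * (a^(n+1) + b^(n+1) + c^(n+1))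
      + a*b*c * (a^n + b^n + c^n)"
  by (simp add: power_add power2_eq_square power3_eq_cube algebra_simps)

lemma S_eq_power_sum:
  fixes a b c :: "'a :: comm_ring_1"
  assumes e1: "a + b + c = 1" and e2: "a*b + a*c + b*c = -1" and e3: "a*b*c = 1"
  shows "of_int (S n) = a^n + b^n + c^n"
proof (induction n rule: S.induct)
  case 1
  show ?case by simp
next
  case 2
  show ?case using e1 by simp
next
  case 3
  have "a^2 + b^2 + c^2 = (a+b+c)^2 - 2*(a*b + a*c + b*c)"
    by (simp add: power2_eq_square algebra_simps)
  then show ?case using e1 e2 by (simp add: power2_eq_square)
next
  case (4 n)
  then show ?case
    using power_sum_newton3[of a n b c] e1 e2 e3 by (simp add: numeral_eq_Suc)
qed

lemma sym2_square_minus_sum_square_products: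
  fixes x y z :: "'a :: comm_ring_1"
  shows "(x*y + x*z + y*z)^2 - ((x*y)^2 + (x*z)^2 + (y*z)^2) = 2 * (x*y*z) * (x + y + z)"
  by (simp add: power2_eq_square algebra_simps)

lemma C_square_minus_C_double:
  "(C \<alpha> \<beta> \<gamma> n)^2 - C \<alpha> \<beta> \<gamma> (2 * n) = 2 * (\<alpha>*\<beta>*\<gamma>)^n * (\<alpha>^n + \<beta>^n + \<gamma>^n)"
  using sym2_square_minus_sum_square_products[of "\<alpha>^n" "\<beta>^n" "\<gamma>^n"]
  by (simp add: C_def power_mult power_mult_distrib mult.commute[of 2 n])

theorem mainTheorem10:
  fixes \<alpha> \<beta> \<gamma> :: complex and n :: nat
  assumes roots: "\<forall>x::complex. x^3 - x^2 - x - 1 = (x - \<alpha>) * (x - \<beta>) * (x - \<gamma>)"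
  shows "2 * of_int (S n) = (C \<alpha> \<beta> \<gamma> n)^2 - C \<alpha> \<beta> \<gamma> (2 * n)"
proof -
  have "\<forall>x::complex. x^3 + (-1)*x^2 + (-1)*x + (-1) = (x - \<alpha>) * (x - \<beta>) * (x - \<gamma>)"
    using roots by simp
  note vieta = vieta_cubic[OF this]
  have e3: "\<alpha>*\<beta>*\<gamma> = 1" using vieta(3) by simp
  have "of_int (S n) = \<alpha>^n + \<beta>^n + \<gamma>^n"
    using S_eq_power_sum vieta e3 by simp
  then show ?thesis
    using C_square_minus_C_double[of \<alpha> \<beta> \<gamma> n] e3 by simp
qed

end
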